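(* Let $\Gamma$ be a finite group and $\mathbf{E}=\bigoplus_{w\in\Gamma}\mathbf{E}_w$ a finite-dimensional associative $\bar{\mathbb{Q}}_l$-algebra with $1$, with $\dim\mathbf{E}_w=1$ and $\mathbf{E}_w\mathbf{E}_y=\mathbf{E}_{wy}$ for all $w,y$; for each $w$ choose a basis element $b_w$ of $\mathbf{E}_w$ (each $b_w$ is invertible). Let $V,V'$ be simple $\mathbf{E}$-modules and $t:V\to V$, $t':V'\to V'$ invertible $\bar{\mathbb{Q}}_l$-linear maps, and set $N=|\Gamma|^{-1}\sum_{w\in\Gamma}\mathrm{tr}(b_wt,V)\,\mathrm{tr}(t'^{-1}b_w^{-1},V')$. Then $N=0$ if $V,V'$ are not isomorphic $\mathbf{E}$-modules, and $N=1$ if $V=V'$ and $t=t'$. *)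

theory Defs
  imports "HOL-Algebra.Group" "HOL-Computational_Algebra.Polynomial"
begin

definition alg_closed_field :: "'k::field itself \<Rightarrow> bool" where
  "alg_closed_field _ \<longleftrightarrow> (\<forall>p :: 'k poly. degree p > 0 \<longrightarrow> (\<exists>x. poly p x = 0))"

definition is_algebra :: "('k::field \<Rightarrow> 'e::ring_1 \<Rightarrow> 'e) \<Rightarrow> bool" where
  "is_algebra scE \<longleftrightarrow> vector_space scE \<and>
     (\<forall>c x y. scE c (x * y) = scE c x * y \<and> scE c (x * y) = x * scE c y)"

definition internal_direct_sum :: "('k::field \<Rightarrow> 'e::ab_group_add \<Rightarrow> 'e) \<Rightarrow> 'g set \<Rightarrow> ('g \<Rightarrow> 'e set) \<Rightarrow> bool" where
  "internal_direct_sum sc I A \<longleftrightarrow>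
     (\<forall>w\<in>I. module.subspace sc (A w)) \<and>
     module.span sc (\<Union>w\<in>I. A w) = UNIV \<and>
     (\<forall>f. (\<forall>w\<in>I. f w \<in> A w) \<and> sum f I = 0 \<longrightarrow> (\<forall>w\<in>I. f w = 0))"

definition subspace_prod :: "('k::field \<Rightarrow> 'e::ring_1 \<Rightarrow> 'e) \<Rightarrow> 'e set \<Rightarrow> 'e set \<Rightarrow> 'e set" where
  "subspace_prod scE A B = module.span scE {a * b | a b. a \<in> A \<and> b \<in> B}"

definition ring_inv :: "'e::ring_1 \<Rightarrow> 'e" where
  "ring_inv x = (THE y. x * y = 1 \<and> y * x = 1)"

definition E_module :: "('k::field \<Rightarrow> 'e::ring_1 \<Rightarrow> 'e) \<Rightarrow> ('k \<Rightarrow> 'v::ab_group_add \<Rightarrow> 'v) \<Rightarrow> ('e \<Rightarrow> 'v \<Rightarrow> 'v) \<Rightarrow> bool" where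
  "E_module scE scV act \<longleftrightarrow> vector_space scV \<and>
     (\<forall>x y v. act (x + y) v = act x v + act y v) \<and>
     (\<forall>x u v. act x (u + v) = act x u + act x v) \<and>
     (\<forall>v. act 1 v = v) \<and>
     (\<forall>x y v. act (x * y) v = act x (act y v)) \<and>
     (\<forall>c x v. act (scE c x) v = scV c (act x v)) \<and>
     (\<forall>c x v. act x (scV c v) = scV c (act x v))"

definition simple_E_module :: "('k::field \<Rightarrow> 'e::ring_1 \<Rightarrow> 'e) \<Rightarrow> ('k \<Rightarrow> 'v::ab_group_add \<Rightarrow> 'v) \<Rightarrow> ('e \<Rightarrow> 'v \<Rightarrow> 'v) \<Rightarrow> bool" where
  "simple_E_module scE scV act \<longleftrightarrow> E_module scE scV act \<and> (\<exists>v::'v. v \<noteq> 0) \<and>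
     (\<forall>U. module.subspace scV U \<and> (\<forall>x. \<forall>u\<in>U. act x u \<in> U) \<longrightarrow> U = {0} \<or> U = UNIV)"

definition E_module_iso :: "('k::field \<Rightarrow> 'v::ab_group_add \<Rightarrow> 'v) \<Rightarrow> ('e \<Rightarrow> 'v \<Rightarrow> 'v) \<Rightarrow> ('k \<Rightarrow> 'w::ab_group_add \<Rightarrow> 'w) \<Rightarrow> ('e \<Rightarrow> 'w \<Rightarrow> 'w) \<Rightarrow> bool" where
  "E_module_iso scV act scW act' \<longleftrightarrow>
     (\<exists>f. bij f \<and> Vector_Spaces.linear scV scW f \<and> (\<forall>x v. f (act x v) = act' x (f v)))"

definition vtrace :: "('k::field \<Rightarrow> 'v::ab_group_add \<Rightarrow> 'v) \<Rightarrow> ('v \<Rightarrow> 'v) \<Rightarrow> 'k" where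
  "vtrace sc f = (let B = (SOME B. \<not> module.dependent sc B \<and> module.span sc B = UNIV)
     in \<Sum>b\<in>B. module.representation sc B (f b) b)"

end

theory Submission
  imports Defs
begin

text \<open>
  For a linear map X from V to V', the average A(X) = sum over w of b_w^-1 X b_w is a
  homomorphism of E-modules: the b_w span E, and b_y b_(uy)^-1 is a nonzero multiple of
  b_u^-1, so multiplying by b_y only permutes the summands. Expanding both traces in bases,
  the sum over w of tr(b_w t) tr(t'^-1 b_w^-1) becomes the sum over i, j of the j-th coordinate
  of t'^-1 A(e_ij) t i, where e_ij is the matrix unit sending i to j. By Schur's lemma
  A(e_ij) = 0 when V and V' are not isomorphic, so N = 0. When V = V' and t = t', each A(e_ij)
  is a scalar l_ij because the field is algebraically closed; the sum collapses to the sum of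
  the l_ii, and comparing traces, l_ii dim V = tr A(e_ii) = |\<Gamma>| tr e_ii = |\<Gamma>|, so N = 1.
\<close>

lemma linear_module_hom: "Vector_Spaces.linear s1 s2 f \<Longrightarrow> module_hom s1 s2 f"
  by (simp add: module_hom_iff_linear)

lemmas linear_map_add = module_hom.add[OF linear_module_hom]
  and linear_map_diff = module_hom.diff[OF linear_module_hom]
  and linear_map_scale = module_hom.scale[OF linear_module_hom]
  and linear_map_zero = module_hom.zero[OF linear_module_hom]
  and linear_map_sum = module_hom.sum[OF linear_module_hom]

lemma linear_inv_into:
  assumes f: "Vector_Spaces.linear s1 s2 f" and "bij f"
  shows "Vector_Spaces.linear s2 s1 (inv_into UNIV f)"
proof -
  have "module_pair s1 s2"
    using f by (simp add: module_pair_def Vector_Spaces.linear_iff module_iff_vector_space)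
  from module_pair.bij_module_hom_imp_inv_module_hom[OF this linear_module_hom[OF f] \<open>bij f\<close>]
  show ?thesis by (simp add: module_hom_iff_linear)
qed

lemma linear_funpow:
  assumes f: "Vector_Spaces.linear s s f"
  shows "Vector_Spaces.linear s s (f ^^ n)"
proof (induction n)
  case 0
  from f show ?case by (simp add: Vector_Spaces.linear_iff)
next
  case (Suc n)
  show ?case
    unfolding funpow.simps(2) by (rule Vector_Spaces.linear_compose[OF Suc f])
qed

lemma ring_inv_eqI:
  fixes x y :: "'e::ring_1"
  assumes "x * y = 1" and "y * x = 1"
  shows "ring_inv x = y"
  unfolding ring_inv_def
proof (rule the_equality)
  show "x * y = 1 \<and> y * x = 1"
    using assms ..
  show "z = y" if "x * z = 1 \<and> z * x = 1" for z
  proof -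
    have "z = z * (x * y)"
      using assms by simp
    also have "\<dots> = y"
      using that by (simp add: mult.assoc[symmetric])
    finally show ?thesis .
  qed
qed

section \<open>Eigenvectors over an algebraically closed field\<close>

definition poly_endo :: "('k::field \<Rightarrow> 'v::ab_group_add \<Rightarrow> 'v) \<Rightarrow> 'k poly \<Rightarrow> ('v \<Rightarrow> 'v) \<Rightarrow> 'v \<Rightarrow> 'v" where
  "poly_endo sc p f v = (\<Sum>i\<le>degree p. sc (coeff p i) ((f ^^ i) v))"

context vector_space
begin

lemma poly_endo_eq_sum:
  assumes "degree p < n"
  shows "poly_endo scale p f v = (\<Sum>i<n. scale (coeff p i) ((f ^^ i) v))"
  unfolding poly_endo_def
  by (rule sum.mono_neutral_left) (use assms in \<open>auto intro!: coeff_eq_0\<close>)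

lemma poly_endo_linear_factor:
  assumes f: "Vector_Spaces.linear scale scale f"
  shows "poly_endo scale ([:-a, 1:] * q) f v = poly_endo scale q f (f v - scale a v)"
proof -
  let ?n = "Suc (degree q)"
  have coeff_factor:
    "coeff ([:-a, 1:] * q) i = (case i of 0 \<Rightarrow> 0 | Suc j \<Rightarrow> coeff q j) - a * coeff q i" for i
    by (simp add: mult_pCons_left coeff_pCons split: nat.split)
  have "degree ([:-a, 1:] * q) < Suc ?n"
    using degree_mult_le[of "[:-a, 1:]" q] by simp
  then have "poly_endo scale ([:-a, 1:] * q) f v
      = (\<Sum>i<Suc ?n. scale (coeff ([:-a, 1:] * q) i) ((f ^^ i) v))"
    by (rule poly_endo_eq_sum)
  also have "\<dots> = (\<Sum>i<Suc ?n. scale (case i of 0 \<Rightarrow> 0 | Suc j \<Rightarrow> coeff q j) ((f ^^ i) v))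
        - (\<Sum>i<Suc ?n. scale (a * coeff q i) ((f ^^ i) v))"
    unfolding coeff_factor scale_left_diff_distrib sum_subtractf ..
  also have "\<dots> = (\<Sum>i<?n. scale (coeff q i) ((f ^^ i) (f v)))
        - (\<Sum>i<?n. scale (coeff q i) ((f ^^ i) (scale a v)))"
  proof -
    have "(\<Sum>i<Suc ?n. scale (case i of 0 \<Rightarrow> 0 | Suc j \<Rightarrow> coeff q j) ((f ^^ i) v))
        = (\<Sum>i<?n. scale (coeff q i) ((f ^^ i) (f v)))"
      unfolding sum.lessThan_Suc_shift by (simp add: funpow_swap1)
    moreover have "(\<Sum>i<Suc ?n. scale (a * coeff q i) ((f ^^ i) v))
        = (\<Sum>i<?n. scale (coeff q i) ((f ^^ i) (scale a v)))"
      using linear_map_scale[OF linear_funpow[OF f]]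
      by (simp add: coeff_eq_0 scale_scale mult.commute)
    ultimately show ?thesis by simp
  qed
  also have "\<dots> = poly_endo scale q f (f v - scale a v)"
    using linear_map_diff[OF linear_funpow[OF f]]
    by (simp add: poly_endo_def lessThan_Suc_atMost sum_subtractf scale_right_diff_distrib)
  finally show ?thesis .
qed

lemma eigenvector_of_poly_endo_eq_0:
  assumes k: "alg_closed_field TYPE('a)" and f: "Vector_Spaces.linear scale scale f"
  shows "p \<noteq> 0 \<Longrightarrow> v \<noteq> 0 \<Longrightarrow> poly_endo scale p f v = 0 \<Longrightarrow> \<exists>l u. u \<noteq> 0 \<and> f u = scale l u"
proof (induction "degree p" arbitrary: p v rule: less_induct)
  case less
  show ?case
  proof (cases "degree p = 0")
    case True
    then have "poly_endo scale p f v = scale (coeff p 0) v"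
      by (simp add: poly_endo_def)
    moreover have "coeff p 0 \<noteq> 0"
      using True less.prems(1) leading_coeff_neq_0 by fastforce
    ultimately show ?thesis
      using less.prems by simp
  next
    case False
    then obtain a where "poly p a = 0"
      using k unfolding alg_closed_field_def by auto
    then obtain q where p: "p = [:-a, 1:] * q"
      by (auto simp: poly_eq_0_iff_dvd elim: dvdE)
    with less.prems(1) have "q \<noteq> 0" by auto
    then have "degree q < degree p"
      unfolding p by (subst degree_mult_eq) auto
    show ?thesis
    proof (cases "f v - scale a v = 0")
      case True
      with less.prems(2) show ?thesis by auto
    next
      case False
      have "poly_endo scale q f (f v - scale a v) = 0"
        using less.prems(3) p poly_endo_linear_factor[OF f] by simp
      with less.hyps[OF \<open>degree q < degree p\<close> \<open>q \<noteq> 0\<close> False] show ?thesis .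
    qed
  qed
qed

end

context finite_dimensional_vector_space
begin

lemma nontrivial_linear_relation:
  "\<exists>c. (\<exists>k\<le>dimension. c k \<noteq> 0) \<and> (\<Sum>k\<le>dimension. scale (c k) (g k)) = 0"
proof (cases "inj_on g {..dimension}")
  case True
  have "card (g ` {..dimension}) = Suc dimension"
    using card_image[OF True] by simp
  then have "dependent (g ` {..dimension})"
    using dim_subset_UNIV[of "g ` {..dimension}"] by (intro dependent_biggerset_general) auto
  then obtain u where u: "\<exists>x\<in>g ` {..dimension}. u x \<noteq> 0" "(\<Sum>x\<in>g ` {..dimension}. scale (u x) x) = 0"
    using dependent_finite by blast
  show ?thesis
    by (rule exI[of _ "u \<circ> g"]) (use u in \<open>auto simp: sum.reindex[OF True]\<close>)
next
  case False
  then obtain i j where ij: "i \<le> dimension" "j \<le> dimension" "i \<noteq> j" "g i = g j"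
    unfolding inj_on_def by auto
  let ?c = "\<lambda>k. (if k = i then 1 else 0) - (if k = j then 1 else 0)"
  have "(\<Sum>k\<le>dimension. scale (?c k) (g k))
      = (\<Sum>k\<le>dimension. if k = i then g k else 0) - (\<Sum>k\<le>dimension. if k = j then g k else 0)"
    by (simp add: scale_left_diff_distrib sum_subtractf if_distrib[of "\<lambda>x. scale x _"]
        cong: if_cong)
  also have "\<dots> = 0"
    using ij by simp
  finally show ?thesis
    using ij by (intro exI[of _ ?c]) auto
qed

lemma eigenvector_exists:
  assumes k: "alg_closed_field TYPE('a)" and f: "Vector_Spaces.linear scale scale f"
    and "(v::'b) \<noteq> 0"
  shows "\<exists>l u. u \<noteq> 0 \<and> f u = scale l u"
proof -
  obtain c k where "k \<le> dimension" "c k \<noteq> 0"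
    and rel: "(\<Sum>k\<le>dimension. scale (c k) ((f ^^ k) v)) = 0"
    using nontrivial_linear_relation[of "\<lambda>k. (f ^^ k) v"] by blast
  define p where "p = (\<Sum>k\<le>dimension. monom (c k) k)"
  have coeff_p: "coeff p k = (if k \<le> dimension then c k else 0)" for k
    unfolding p_def by (simp add: coeff_sum coeff_monom)
  with \<open>k \<le> dimension\<close> \<open>c k \<noteq> 0\<close> have "p \<noteq> 0"
    by (metis coeff_0)
  have "degree p < Suc dimension"
    using coeff_p by (intro le_imp_less_Suc degree_le) auto
  then have "poly_endo scale p f v = (\<Sum>k<Suc dimension. scale (coeff p k) ((f ^^ k) v))"
    by (rule poly_endo_eq_sum)
  also have "\<dots> = 0"
    using rel by (simp add: coeff_p lessThan_Suc_atMost)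
  finally show ?thesis
    using eigenvector_of_poly_endo_eq_0[OF k f \<open>p \<noteq> 0\<close> \<open>v \<noteq> 0\<close>] by blast
qed

end

section \<open>Coordinates and traces\<close>

definition basis_of :: "('k::field \<Rightarrow> 'v::ab_group_add \<Rightarrow> 'v) \<Rightarrow> 'v set" where
  "basis_of sc = (SOME B. \<not> module.dependent sc B \<and> module.span sc B = UNIV)"

definition coord :: "('k::field \<Rightarrow> 'v::ab_group_add \<Rightarrow> 'v) \<Rightarrow> 'v \<Rightarrow> 'v \<Rightarrow> 'k" where
  "coord sc = module.representation sc (basis_of sc)"

definition matrix_unit ::
  "('k::field \<Rightarrow> 'v::ab_group_add \<Rightarrow> 'v) \<Rightarrow> ('k \<Rightarrow> 'w::ab_group_add \<Rightarrow> 'w) \<Rightarrow> 'v \<Rightarrow> 'w \<Rightarrow> 'v \<Rightarrow> 'w" where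
  "matrix_unit scV scW i j v = scW (coord scV v i) j"

lemma vtrace_eq_sum_coord: "vtrace sc f = (\<Sum>i\<in>basis_of sc. coord sc (f i) i)"
  by (simp add: vtrace_def basis_of_def coord_def Let_def)

locale fin_dim_space = finite_dimensional_vector_space scale "basis_of scale"
  for scale :: "'a::field \<Rightarrow> 'b::ab_group_add \<Rightarrow> 'b"

lemma (in vector_space) fin_dim_spaceI:
  assumes "finite S" and "span S = UNIV"
  shows "fin_dim_space scale"
proof -
  obtain B where "independent B" "UNIV \<subseteq> span B"
    using basis_exists[of UNIV] by blast
  then have "independent (basis_of scale) \<and> span (basis_of scale) = UNIV"
    unfolding basis_of_def by (intro someI[where P = "\<lambda>B. independent B \<and> span B = UNIV"]) auto
  moreover from this have "finite (basis_of scale)"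
    using independent_span_bound[OF assms(1)] assms(2) by auto
  ultimately show ?thesis
    by unfold_locales auto
qed

context fin_dim_space
begin

lemma in_span_basis_of [simp]: "v \<in> span (basis_of scale)"
  by (simp add: span_Basis)

lemma coord_zero [simp]: "coord scale 0 i = 0"
  by (simp add: coord_def representation_zero)

lemma coord_add: "coord scale (u + v) i = coord scale u i + coord scale v i"
  by (simp add: coord_def representation_add independent_Basis)

lemma coord_scale: "coord scale (scale c v) i = c * coord scale v i"
  by (simp add: coord_def representation_scale independent_Basis)

lemma coord_sum: "coord scale (\<Sum>x\<in>A. f x) i = (\<Sum>x\<in>A. coord scale (f x) i)"
  by (simp add: coord_def representation_sum independent_Basis)

lemma coord_basis: "i \<in> basis_of scale \<Longrightarrow> coord scale i j = (if j = i then 1 else 0)"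
  by (simp add: coord_def representation_basis independent_Basis)

lemma sum_coord: "(\<Sum>i\<in>basis_of scale. scale (coord scale v i) i) = v"
  unfolding coord_def by (rule sum_representation_eq) (simp_all add: independent_Basis finite_Basis)

lemma coord_linear_image:
  assumes "Vector_Spaces.linear scale scale F"
  shows "coord scale (F v) j = (\<Sum>d\<in>basis_of scale. coord scale v d * coord scale (F d) j)"
proof -
  have "coord scale (F v) j = coord scale (F (\<Sum>d\<in>basis_of scale. scale (coord scale v d) d)) j"
    by (simp only: sum_coord)
  also have "\<dots> = (\<Sum>d\<in>basis_of scale. coord scale v d * coord scale (F d) j)"
    by (simp add: linear_map_sum[OF assms] linear_map_scale[OF assms] coord_sum coord_scale)
  finally show ?thesis .
qed

lemma card_basis_of_pos:
  assumes "(v::'b) \<noteq> 0"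
  shows "0 < card (basis_of scale)"
proof (rule ccontr)
  assume "\<not> 0 < card (basis_of scale)"
  then have "basis_of scale = {}"
    using finite_Basis by simp
  then have "v = 0"
    using span_Basis by (metis UNIV_I span_empty singletonD)
  with assms show False ..
qed

lemma vtrace_sum: "vtrace scale (\<lambda>v. \<Sum>x\<in>A. f x v) = (\<Sum>x\<in>A. vtrace scale (f x))"
  unfolding vtrace_eq_sum_coord coord_sum by (rule sum.swap)

lemma vtrace_scale: "vtrace scale (scale c) = c * of_nat (card (basis_of scale))"
  by (simp add: vtrace_eq_sum_coord coord_scale coord_basis)

lemma vtrace_matrix_unit:
  assumes "i \<in> basis_of scale"
  shows "vtrace scale (matrix_unit scale scale i i) = 1"
proof -
  have "vtrace scale (matrix_unit scale scale i i)
      = (\<Sum>c\<in>basis_of scale. coord scale c i * coord scale i c)"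
    by (simp add: vtrace_eq_sum_coord matrix_unit_def coord_scale)
  also have "\<dots> = 1"
    using assms by (simp add: coord_basis finite_Basis if_distrib cong: if_cong)
  finally show ?thesis .
qed

lemma vtrace_comp:
  assumes "Vector_Spaces.linear scale scale F"
  shows "vtrace scale (\<lambda>v. F (G v))
    = (\<Sum>c\<in>basis_of scale. \<Sum>d\<in>basis_of scale. coord scale (G c) d * coord scale (F d) c)"
  unfolding vtrace_eq_sum_coord by (intro sum.cong refl coord_linear_image[OF assms])

lemma vtrace_comp_commute:
  assumes "Vector_Spaces.linear scale scale F" and "Vector_Spaces.linear scale scale G"
  shows "vtrace scale (\<lambda>v. F (G v)) = vtrace scale (\<lambda>v. G (F v))"
  unfolding vtrace_comp[OF assms(1)] vtrace_comp[OF assms(2)]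
  by (subst sum.swap) (simp add: mult.commute)

end

lemma linear_matrix_unit:
  assumes "fin_dim_space scV" and "vector_space scW"
  shows "Vector_Spaces.linear scV scW (matrix_unit scV scW i j)"
proof -
  interpret V: fin_dim_space scV by fact
  interpret W: vector_space scW by fact
  show ?thesis
    unfolding Vector_Spaces.linear_iff matrix_unit_def
    by (simp add: V.vector_space_axioms W.vector_space_axioms V.coord_add V.coord_scale
        W.scale_left_distrib)
qed

lemma vtrace_mult_vtrace:
  assumes "fin_dim_space scV" and "fin_dim_space scW" and G: "Vector_Spaces.linear scW scW G"
  shows "vtrace scV F * vtrace scW G
    = (\<Sum>i\<in>basis_of scV. \<Sum>j\<in>basis_of scW. coord scW (G (matrix_unit scV scW i j (F i))) j)"
proof -
  interpret V: fin_dim_space scV by fact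
  interpret W: fin_dim_space scW by fact
  show ?thesis
    by (simp add: vtrace_eq_sum_coord sum_product matrix_unit_def linear_map_scale[OF G]
        W.coord_scale)
qed

section \<open>Modules and Schur's lemma\<close>

lemma
  assumes "E_module scE scV act"
  shows E_module_vector_space: "vector_space scV"
    and E_module_act_mult: "act (x * y) v = act x (act y v)"
    and E_module_act_one: "act 1 v = v"
    and E_module_act_scale: "act (scE c x) v = scV c (act x v)"
    and E_module_linear_act: "Vector_Spaces.linear scV scV (act x)"
  using assms by (simp_all add: E_module_def Vector_Spaces.linear_iff)

lemma E_module_linear_orbit:
  assumes "E_module scE scV act" and "vector_space scE"
  shows "Vector_Spaces.linear scE scV (\<lambda>x. act x v)"
  using assms by (simp add: E_module_def Vector_Spaces.linear_iff)

definition E_module_hom ::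
  "('k::field \<Rightarrow> 'v::ab_group_add \<Rightarrow> 'v) \<Rightarrow> ('e \<Rightarrow> 'v \<Rightarrow> 'v) \<Rightarrow>
    ('k \<Rightarrow> 'w::ab_group_add \<Rightarrow> 'w) \<Rightarrow> ('e \<Rightarrow> 'w \<Rightarrow> 'w)
    \<Rightarrow> ('v \<Rightarrow> 'w) \<Rightarrow> bool" where
  "E_module_hom scV act scW act' P \<longleftrightarrow>
     Vector_Spaces.linear scV scW P \<and> (\<forall>x v. P (act x v) = act' x (P v))"

lemma E_module_homI_span:
  assumes "vector_space scE" and V: "E_module scE scV act" and W: "E_module scE scW act'"
    and P: "Vector_Spaces.linear scV scW P" and span: "module.span scE S = UNIV"
    and comm: "\<And>x v. x \<in> S \<Longrightarrow> P (act x v) = act' x (P v)"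
  shows "E_module_hom scV act scW act' P"
proof -
  interpret E: vector_space scE by fact
  have orbitV: "Vector_Spaces.linear scE scV (\<lambda>x. act x v)" for v
    by (rule E_module_linear_orbit[OF V \<open>vector_space scE\<close>])
  have orbitW: "Vector_Spaces.linear scE scW (\<lambda>x. act' x w)" for w
    by (rule E_module_linear_orbit[OF W \<open>vector_space scE\<close>])
  have "E.subspace {x. \<forall>v. P (act x v) = act' x (P v)}"
    unfolding E.subspace_def
    using linear_map_zero[OF orbitV] linear_map_zero[OF orbitW] linear_map_zero[OF P]
      linear_map_add[OF P] linear_map_scale[OF P]
    by (simp add: E_module_act_scale[OF V] E_module_act_scale[OF W]
        linear_map_add[OF orbitV] linear_map_add[OF orbitW])
  then have "P (act x v) = act' x (P v)" for x v
    using E.span_induct[of x S "\<lambda>x. \<forall>v. P (act x v) = act' x (P v)"] span comm by auto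
  with P show ?thesis
    by (simp add: E_module_hom_def)
qed

lemma
  fixes scV :: "'k::field \<Rightarrow> 'v::ab_group_add \<Rightarrow> 'v"
  assumes "simple_E_module scE scV act"
  shows simple_E_module_E_module: "E_module scE scV act"
    and simple_E_module_nonzero: "\<exists>v::'v. v \<noteq> 0"
  using assms by (simp_all add: simple_E_module_def)

lemma simple_E_module_invariant_subspace:
  assumes "simple_E_module scE scV act" and "module.subspace scV U"
    and "\<And>x u. u \<in> U \<Longrightarrow> act x u \<in> U"
  shows "U = {0} \<or> U = UNIV"
  using assms unfolding simple_E_module_def by blast

lemma simple_E_module_fin_dimI:
  fixes scV :: "'k::field \<Rightarrow> 'v::ab_group_add \<Rightarrow> 'v"
  assumes simple: "simple_E_module scE scV act" and "vector_space scE"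
    and "finite S" and "module.span scE S = UNIV"
  shows "fin_dim_space scV"
proof -
  note M = simple_E_module_E_module[OF simple]
  interpret V: vector_space scV by (rule E_module_vector_space[OF M])
  obtain v :: 'v where "v \<noteq> 0"
    using simple_E_module_nonzero[OF simple] by blast
  have orbit: "module_hom scE scV (\<lambda>x. act x v)"
    by (rule linear_module_hom[OF E_module_linear_orbit[OF M \<open>vector_space scE\<close>]])
  have span_orbit: "V.span ((\<lambda>x. act x v) ` S) = range (\<lambda>x. act x v)"
    using module_hom.span_image[OF orbit, of S] \<open>module.span scE S = UNIV\<close> by simp
  have "range (\<lambda>x. act x v) = {0} \<or> range (\<lambda>x. act x v) = UNIV"
  proof (rule simple_E_module_invariant_subspace[OF simple])
    show "V.subspace (range (\<lambda>x. act x v))"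
      unfolding span_orbit[symmetric] by simp
    show "act y u \<in> range (\<lambda>x. act x v)" if "u \<in> range (\<lambda>x. act x v)" for y u
      using that by (auto simp flip: E_module_act_mult[OF M])
  qed
  moreover have "v \<in> range (\<lambda>x. act x v)"
    using E_module_act_one[OF M] by (metis rangeI)
  ultimately have "V.span ((\<lambda>x. act x v) ` S) = UNIV"
    using \<open>v \<noteq> 0\<close> span_orbit by auto
  with \<open>finite S\<close> show ?thesis
    by (intro V.fin_dim_spaceI) auto
qed

lemma E_module_hom_vanishes_if_kernel_nonzero:
  assumes simple: "simple_E_module scE scV act" and "E_module scE scW act'"
    and P: "E_module_hom scV act scW act' P" and "P u = 0" and "u \<noteq> 0"
  shows "P v = 0"
proof -
  have lin: "Vector_Spaces.linear scV scW P" and comm: "\<And>x v. P (act x v) = act' x (P v)"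
    using P by (simp_all add: E_module_hom_def)
  have "{v. P v = 0} = {0} \<or> {v. P v = 0} = UNIV"
  proof (rule simple_E_module_invariant_subspace[OF simple])
    show "module.subspace scV {v. P v = 0}"
      by (rule module_hom.subspace_kernel[OF linear_module_hom[OF lin]])
    show "act x w \<in> {v. P v = 0}" if "w \<in> {v. P v = 0}" for x w
      using that comm linear_map_zero[OF E_module_linear_act[OF \<open>E_module scE scW act'\<close>]] by simp
  qed
  with \<open>P u = 0\<close> \<open>u \<noteq> 0\<close> show ?thesis
    by auto
qed

lemma E_module_hom_zero_if_not_iso:
  assumes simpleV: "simple_E_module scE scV act" and simpleW: "simple_E_module scE scW act'"
    and P: "E_module_hom scV act scW act' P" and not_iso: "\<not> E_module_iso scV act scW act'"
  shows "P v = 0"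
proof (rule ccontr)
  assume "P v \<noteq> 0"
  have lin: "Vector_Spaces.linear scV scW P" and comm: "\<And>x v. P (act x v) = act' x (P v)"
    using P by (simp_all add: E_module_hom_def)
  note W = simple_E_module_E_module[OF simpleW]
  have "inj P"
    unfolding module_hom.inj_iff_eq_0[OF linear_module_hom[OF lin]]
    using E_module_hom_vanishes_if_kernel_nonzero[OF simpleV W P] \<open>P v \<noteq> 0\<close> by blast
  have "range P = {0} \<or> range P = UNIV"
  proof (rule simple_E_module_invariant_subspace[OF simpleW])
    show "module.subspace scW (range P)"
      using module_hom.subspace_image[OF linear_module_hom[OF lin] module.subspace_UNIV]
        E_module_vector_space[OF simple_E_module_E_module[OF simpleV]]
      by (simp add: module_iff_vector_space)
    show "act' x w \<in> range P" if "w \<in> range P" for x w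
      using that by (auto simp flip: comm)
  qed
  with \<open>P v \<noteq> 0\<close> have "bij P"
    using \<open>inj P\<close> by (auto simp: bij_def)
  with lin comm have "E_module_iso scV act scW act'"
    unfolding E_module_iso_def by blast
  with not_iso show False ..
qed

lemma E_module_hom_scalar:
  fixes scV :: "'k::field \<Rightarrow> 'v::ab_group_add \<Rightarrow> 'v"
  assumes k: "alg_closed_field TYPE('k)" and simple: "simple_E_module scE scV act"
    and "fin_dim_space scV" and P: "E_module_hom scV act scV act P"
  shows "\<exists>l. \<forall>v. P v = scV l v"
proof -
  interpret V: fin_dim_space scV by fact
  note M = simple_E_module_E_module[OF simple]
  have lin: "Vector_Spaces.linear scV scV P" and comm: "\<And>x v. P (act x v) = act x (P v)"
    using P by (simp_all add: E_module_hom_def)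
  obtain v :: 'v where "v \<noteq> 0"
    using simple_E_module_nonzero[OF simple] by blast
  then obtain l u where "u \<noteq> 0" "P u = scV l u"
    using V.eigenvector_exists[OF k lin] by blast
  have "Vector_Spaces.linear scV scV (\<lambda>v. P v - scV l v)"
    unfolding Vector_Spaces.linear_iff
    using linear_map_add[OF lin] linear_map_scale[OF lin] V.vector_space_axioms
    by (simp add: V.scale_right_diff_distrib V.scale_right_distrib V.scale_left_commute)
  then have "E_module_hom scV act scV act (\<lambda>v. P v - scV l v)"
    unfolding E_module_hom_def
    using comm linear_map_diff[OF E_module_linear_act[OF M]]
      linear_map_scale[OF E_module_linear_act[OF M]]
    by simp
  from E_module_hom_vanishes_if_kernel_nonzero[OF simple M this] \<open>P u = scV l u\<close> \<open>u \<noteq> 0\<close>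
  show ?thesis
    by auto
qed

section \<open>Twisted group algebras\<close>

locale twisted_group_algebra = group G
  for G :: "('g, 'm) monoid_scheme" (structure) +
  fixes scE :: "'k::field \<Rightarrow> 'e::ring_1 \<Rightarrow> 'e"
    and Ecomp :: "'g \<Rightarrow> 'e set"
    and b :: "'g \<Rightarrow> 'e"
  assumes finite_carrier: "finite (carrier G)"
    and algebra: "is_algebra scE"
    and direct_sum: "internal_direct_sum scE (carrier G) Ecomp"
    and dim_component: "\<And>w. w \<in> carrier G \<Longrightarrow> vector_space.dim scE (Ecomp w) = 1"
    and mult_component: "\<And>w y. w \<in> carrier G \<Longrightarrow> y \<in> carrier G \<Longrightarrow>
      subspace_prod scE (Ecomp w) (Ecomp y) = Ecomp (w \<otimes> y)"
    and b_in_component: "\<And>w. w \<in> carrier G \<Longrightarrow> b w \<in> Ecomp w"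
    and b_nonzero: "\<And>w. w \<in> carrier G \<Longrightarrow> b w \<noteq> 0"
begin

sublocale E: vector_space scE
  using algebra by (simp add: is_algebra_def)

lemma scale_mult_left: "scE c x * y = scE c (x * y)"
  using algebra unfolding is_algebra_def by metis

lemma scale_mult_right: "x * scE c y = scE c (x * y)"
  using algebra unfolding is_algebra_def by metis

lemma component_eq_span:
  assumes w: "w \<in> carrier G"
  shows "Ecomp w = E.span {b w}"
proof -
  obtain B where B: "B \<subseteq> Ecomp w" "E.independent B" "Ecomp w \<subseteq> E.span B"
      "card B = E.dim (Ecomp w)"
    using E.basis_exists by blast
  then obtain c where "B = {c}"
    using dim_component[OF w] B(4) by (auto simp: card_1_singleton_iff)
  then have "b w \<in> E.span {c}"
    using B(3) b_in_component[OF w] by auto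
  then obtain k where "b w = scE k c"
    using E.span_singleton by auto
  with b_nonzero[OF w] have "c = scE (1 / k) (b w)"
    by auto
  then have "E.span {c} \<subseteq> E.span {b w}"
    by (simp add: E.span_minimal E.span_base E.span_scale)
  moreover have "E.span {b w} \<subseteq> Ecomp w"
    using direct_sum w b_in_component[OF w]
    by (simp add: internal_direct_sum_def E.span_minimal)
  ultimately show ?thesis
    using B(3) \<open>B = {c}\<close> by auto
qed

lemma span_image_b: "E.span (b ` carrier G) = UNIV"
proof -
  have "Ecomp w \<subseteq> E.span (b ` carrier G)" if "w \<in> carrier G" for w
    unfolding component_eq_span[OF that] using that by (intro E.span_mono) auto
  then have "E.span (\<Union>w\<in>carrier G. Ecomp w) \<subseteq> E.span (b ` carrier G)"
    by (intro E.span_minimal UN_least) auto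
  then show ?thesis
    using direct_sum by (auto simp: internal_direct_sum_def)
qed

lemma b_mult_b:
  assumes w: "w \<in> carrier G" and y: "y \<in> carrier G"
  shows "\<exists>a. a \<noteq> 0 \<and> b w * b y = scE a (b (w \<otimes> y))"
proof -
  have "b w * b y \<in> subspace_prod scE (Ecomp w) (Ecomp y)"
    unfolding subspace_prod_def using b_in_component w y by (intro E.span_base) blast
  then have "b w * b y \<in> E.span {b (w \<otimes> y)}"
    using mult_component[OF w y] component_eq_span[of "w \<otimes> y"] w y by simp
  then obtain a where a: "b w * b y = scE a (b (w \<otimes> y))"
    using E.span_singleton by auto
  have "a \<noteq> 0"
  proof
    assume "a = 0"
    have "{p * q | p q. p \<in> Ecomp w \<and> q \<in> Ecomp y} \<subseteq> {0}"
    proof clarify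
      fix p q assume "p \<in> Ecomp w" "q \<in> Ecomp y"
      then obtain k1 k2 where "p = scE k1 (b w)" and "q = scE k2 (b y)"
        using w y by (auto simp: component_eq_span E.span_singleton)
      then show "p * q = 0"
        using a \<open>a = 0\<close> by (simp add: scale_mult_left scale_mult_right)
    qed
    then have "subspace_prod scE (Ecomp w) (Ecomp y) \<subseteq> {0}"
      unfolding subspace_prod_def by (intro E.span_minimal E.subspace_single_0)
    then have "b (w \<otimes> y) = 0"
      using mult_component[OF w y] b_in_component[of "w \<otimes> y"] w y by auto
    with b_nonzero[of "w \<otimes> y"] w y show False
      by simp
  qed
  with a show ?thesis
    by blast
qed

lemma eq_1_if_left_unit_on_b:
  assumes "\<And>y. y \<in> carrier G \<Longrightarrow> u * b y = b y"
  shows "u = 1"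
proof -
  have "E.subspace {x. u * x = x}"
    unfolding E.subspace_def by (auto simp: distrib_left scale_mult_right)
  then have "u * x = x" for x
    using E.span_induct[of x "b ` carrier G" "\<lambda>x. u * x = x"] span_image_b assms by auto
  then show ?thesis
    by (metis mult.right_neutral)
qed

lemma b_one: "\<exists>c. c \<noteq> 0 \<and> b \<one> = scE c 1"
proof -
  obtain c where "c \<noteq> 0" and c: "b \<one> * b \<one> = scE c (b \<one>)"
    using b_mult_b[of \<one> \<one>] by auto
  \<comment> \<open>u is idempotent and u b y is a nonzero multiple of b y, so u b y = b y.\<close>
  define u where "u = scE (1 / c) (b \<one>)"
  have "u * u = u"
    unfolding u_def using c \<open>c \<noteq> 0\<close> by (simp add: scale_mult_left scale_mult_right)
  have "u * b y = b y" if y: "y \<in> carrier G" for y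
  proof -
    obtain a where "a \<noteq> 0" and a: "b \<one> * b y = scE a (b y)"
      using b_mult_b[of \<one> y] y by auto
    define e where "e = a / c"
    have uy: "u * b y = scE e (b y)"
      unfolding u_def e_def using a by (simp add: scale_mult_left)
    have "u * (u * b y) = u * b y"
      using \<open>u * u = u\<close> by (simp add: mult.assoc[symmetric])
    then have "scE (e * e) (b y) = scE e (b y)"
      unfolding uy by (simp add: scale_mult_right uy)
    with b_nonzero[OF y] have "e * e = e"
      by simp
    moreover have "e \<noteq> 0"
      unfolding e_def using \<open>a \<noteq> 0\<close> \<open>c \<noteq> 0\<close> by simp
    ultimately have "e = 1"
      by (metis mult_cancel_right2)
    with uy show ?thesis
      by simp
  qed
  then have "u = 1"
    by (rule eq_1_if_left_unit_on_b)
  moreover have "b \<one> = scE c u"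
    unfolding u_def using \<open>c \<noteq> 0\<close> by simp
  ultimately show ?thesis
    using \<open>c \<noteq> 0\<close> by blast
qed

lemma b_invertible:
  assumes w: "w \<in> carrier G"
  shows "b w * ring_inv (b w) = 1" and "ring_inv (b w) * b w = 1"
proof -
  obtain c where "c \<noteq> 0" and c: "b \<one> = scE c 1"
    using b_one by blast
  obtain a where "a \<noteq> 0" and a: "b w * b (inv w) = scE a (b \<one>)"
    using b_mult_b[of w "inv w"] w by auto
  obtain a' where "a' \<noteq> 0" and a': "b (inv w) * b w = scE a' (b \<one>)"
    using b_mult_b[of "inv w" w] w by auto
  define r where "r = scE (1 / (a * c)) (b (inv w))"
  define l where "l = scE (1 / (a' * c)) (b (inv w))"
  have r: "b w * r = 1"
    unfolding r_def using a c \<open>a \<noteq> 0\<close> \<open>c \<noteq> 0\<close> by (simp add: scale_mult_right)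
  have l: "l * b w = 1"
    unfolding l_def using a' c \<open>a' \<noteq> 0\<close> \<open>c \<noteq> 0\<close> by (simp add: scale_mult_left)
  have "l = r"
    by (metis l r mult.assoc mult_1_left mult_1_right)
  with l r have "ring_inv (b w) = r"
    by (intro ring_inv_eqI) simp_all
  with l r \<open>l = r\<close> show "b w * ring_inv (b w) = 1" and "ring_inv (b w) * b w = 1"
    by simp_all
qed

lemma b_mult_ring_inv:
  assumes u: "u \<in> carrier G" and y: "y \<in> carrier G"
    and a: "b u * b y = scE a (b (u \<otimes> y))"
  shows "b y * ring_inv (b (u \<otimes> y)) = scE a (ring_inv (b u))"
proof -
  have "b y * ring_inv (b (u \<otimes> y)) = ring_inv (b u) * (b u * b y * ring_inv (b (u \<otimes> y)))"
    using b_invertible(2)[OF u] by (simp add: mult.assoc[symmetric])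
  also have "\<dots> = scE a (ring_inv (b u))"
    unfolding a scale_mult_left using b_invertible(1)[of "u \<otimes> y"] u y
    by (simp add: scale_mult_right)
  finally show ?thesis .
qed

lemma simple_E_module_fin_dim_space:
  fixes scV :: "'k \<Rightarrow> 'v::ab_group_add \<Rightarrow> 'v"
  assumes "simple_E_module scE scV act"
  shows "fin_dim_space scV"
  using simple_E_module_fin_dimI[OF assms E.vector_space_axioms _ span_image_b] finite_carrier
  by simp

end

section \<open>Averaging and the orthogonality relations\<close>

context twisted_group_algebra
begin

definition average :: "('e \<Rightarrow> 'v \<Rightarrow> 'v) \<Rightarrow> ('e \<Rightarrow> 'w \<Rightarrow> 'w) \<Rightarrow> ('v \<Rightarrow> 'w) \<Rightarrow> 'v \<Rightarrow> 'w::ab_group_add" where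
  "average act act' X v = (\<Sum>w\<in>carrier G. act' (ring_inv (b w)) (X (act (b w) v)))"

lemma average_linear:
  assumes V: "E_module scE scV act" and W: "E_module scE scW act'"
    and X: "Vector_Spaces.linear scV scW X"
  shows "Vector_Spaces.linear scV scW (average act act' X)"
proof -
  interpret V: vector_space scV by (rule E_module_vector_space[OF V])
  interpret W: vector_space scW by (rule E_module_vector_space[OF W])
  note actV = E_module_linear_act[OF V] and actW = E_module_linear_act[OF W]
  show ?thesis
    unfolding Vector_Spaces.linear_iff average_def
    using V.vector_space_axioms W.vector_space_axioms
    by (simp add: linear_map_add[OF actV] linear_map_add[OF X] linear_map_add[OF actW]
        linear_map_scale[OF actV] linear_map_scale[OF X] linear_map_scale[OF actW]
        sum.distrib W.scale_sum_right)
qed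

lemma average_act_b:
  assumes V: "E_module scE scV act" and W: "E_module scE scW act'"
    and X: "Vector_Spaces.linear scV scW X" and y: "y \<in> carrier G"
  shows "average act act' X (act (b y) v) = act' (b y) (average act act' X v)"
proof -
  interpret W: vector_space scW by (rule E_module_vector_space[OF W])
  have shift: "bij_betw (\<lambda>u. u \<otimes> y) (carrier G) (carrier G)"
    by (rule bij_betw_byWitness[where f' = "\<lambda>u. u \<otimes> inv y"]) (use y in \<open>auto simp: m_assoc\<close>)
  have summand: "act' (b y * ring_inv (b (u \<otimes> y))) (X (act (b (u \<otimes> y)) v))
      = act' (ring_inv (b u)) (X (act (b u) (act (b y) v)))" if u: "u \<in> carrier G" for u
  proof -
    obtain a where "a \<noteq> 0" and a: "b u * b y = scE a (b (u \<otimes> y))"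
      using b_mult_b[OF u y] by blast
    then have "b (u \<otimes> y) = scE (1 / a) (b u * b y)"
      by simp
    then have "act (b (u \<otimes> y)) v = scV (1 / a) (act (b u) (act (b y) v))"
      by (simp add: E_module_act_scale[OF V] E_module_act_mult[OF V])
    with \<open>a \<noteq> 0\<close> show ?thesis
      unfolding b_mult_ring_inv[OF u y a]
      by (simp add: E_module_act_scale[OF W] linear_map_scale[OF X]
          linear_map_scale[OF E_module_linear_act[OF W]] W.scale_scale)
  qed
  have "act' (b y) (average act act' X v)
      = (\<Sum>w\<in>carrier G. act' (b y * ring_inv (b w)) (X (act (b w) v)))"
    unfolding average_def linear_map_sum[OF E_module_linear_act[OF W]] E_module_act_mult[OF W] ..
  also have "\<dots> = (\<Sum>u\<in>carrier G. act' (b y * ring_inv (b (u \<otimes> y))) (X (act (b (u \<otimes> y)) v)))"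
    using sum.reindex_bij_betw[OF shift, of "\<lambda>w. act' (b y * ring_inv (b w)) (X (act (b w) v))"]
    by simp
  also have "\<dots> = average act act' X (act (b y) v)"
    unfolding average_def by (intro sum.cong refl summand)
  finally show ?thesis
    by simp
qed

lemma E_module_hom_average:
  assumes V: "E_module scE scV act" and W: "E_module scE scW act'"
    and X: "Vector_Spaces.linear scV scW X"
  shows "E_module_hom scV act scW act' (average act act' X)"
  using E_module_homI_span[OF E.vector_space_axioms V W average_linear[OF V W X] span_image_b]
    average_act_b[OF V W X] by blast

lemma vtrace_average:
  assumes "fin_dim_space scV" and V: "E_module scE scV act"
    and X: "Vector_Spaces.linear scV scV X"
  shows "vtrace scV (average act act X) = of_nat (card (carrier G)) * vtrace scV X"
proof -
  interpret V: fin_dim_space scV by fact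
  have "vtrace scV (\<lambda>v. act (ring_inv (b w)) (X (act (b w) v))) = vtrace scV X"
    if w: "w \<in> carrier G" for w
  proof -
    have "Vector_Spaces.linear scV scV (\<lambda>v. X (act (b w) v))"
      using Vector_Spaces.linear_compose[OF E_module_linear_act[OF V] X] by (simp add: o_def)
    then have "vtrace scV (\<lambda>v. act (ring_inv (b w)) (X (act (b w) v)))
        = vtrace scV (\<lambda>v. X (act (b w) (act (ring_inv (b w)) v)))"
      by (rule V.vtrace_comp_commute[OF E_module_linear_act[OF V]])
    also have "\<dots> = vtrace scV X"
      by (simp add: b_invertible(1)[OF w] E_module_act_one[OF V] flip: E_module_act_mult[OF V])
    finally show ?thesis .
  qed
  then have "vtrace scV (average act act X) = (\<Sum>w\<in>carrier G. vtrace scV X)"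
    unfolding average_def V.vtrace_sum by (intro sum.cong refl)
  then show ?thesis
    by simp
qed

lemma sum_vtrace_mult_vtrace_eq_average:
  assumes V: "E_module scE scV act" and W: "E_module scE scW act'"
    and "fin_dim_space scV" and "fin_dim_space scW" and T: "Vector_Spaces.linear scW scW T"
  shows "(\<Sum>w\<in>carrier G. vtrace scV (\<lambda>v. act (b w) (t v))
      * vtrace scW (\<lambda>u. T (act' (ring_inv (b w)) u)))
    = (\<Sum>i\<in>basis_of scV. \<Sum>j\<in>basis_of scW.
         coord scW (T (average act act' (matrix_unit scV scW i j) (t i))) j)"
proof -
  interpret W: fin_dim_space scW by fact
  have "Vector_Spaces.linear scW scW (\<lambda>u. T (act' x u))" for x
    using Vector_Spaces.linear_compose[OF E_module_linear_act[OF W] T] by (simp add: o_def)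
  then have "(\<Sum>w\<in>carrier G. vtrace scV (\<lambda>v. act (b w) (t v))
      * vtrace scW (\<lambda>u. T (act' (ring_inv (b w)) u)))
    = (\<Sum>w\<in>carrier G. \<Sum>i\<in>basis_of scV. \<Sum>j\<in>basis_of scW.
         coord scW (T (act' (ring_inv (b w)) (matrix_unit scV scW i j (act (b w) (t i))))) j)"
    by (simp add: vtrace_mult_vtrace[OF assms(3,4)])
  also have "\<dots> = (\<Sum>i\<in>basis_of scV. \<Sum>j\<in>basis_of scW. \<Sum>w\<in>carrier G.
         coord scW (T (act' (ring_inv (b w)) (matrix_unit scV scW i j (act (b w) (t i))))) j)"
    by (simp add: sum.swap[of _ "carrier G"])
  also have "\<dots> = (\<Sum>i\<in>basis_of scV. \<Sum>j\<in>basis_of scW.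
         coord scW (T (average act act' (matrix_unit scV scW i j) (t i))) j)"
    by (simp add: average_def linear_map_sum[OF T] W.coord_sum)
  finally show ?thesis .
qed

lemma sum_vtrace_mult_vtrace_not_iso:
  assumes simpleV: "simple_E_module scE scV act" and simpleW: "simple_E_module scE scW act'"
    and not_iso: "\<not> E_module_iso scV act scW act'" and T: "Vector_Spaces.linear scW scW T"
  shows "(\<Sum>w\<in>carrier G. vtrace scV (\<lambda>v. act (b w) (t v))
      * vtrace scW (\<lambda>u. T (act' (ring_inv (b w)) u))) = 0"
proof -
  note V = simple_E_module_E_module[OF simpleV] and W = simple_E_module_E_module[OF simpleW]
  interpret V: fin_dim_space scV by (rule simple_E_module_fin_dim_space[OF simpleV])
  interpret W: fin_dim_space scW by (rule simple_E_module_fin_dim_space[OF simpleW])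
  have "average act act' (matrix_unit scV scW i j) v = 0" for i j v
    using linear_matrix_unit[OF V.fin_dim_space_axioms W.vector_space_axioms]
    by (intro E_module_hom_zero_if_not_iso[OF simpleV simpleW E_module_hom_average[OF V W] not_iso])
  then show ?thesis
    unfolding sum_vtrace_mult_vtrace_eq_average[OF V W V.fin_dim_space_axioms
        W.fin_dim_space_axioms T]
    by (simp add: linear_map_zero[OF T])
qed

lemma average_matrix_unit_scalar:
  fixes scV :: "'k \<Rightarrow> 'v::ab_group_add \<Rightarrow> 'v"
  assumes k: "alg_closed_field TYPE('k)" and simple: "simple_E_module scE scV act"
  shows "\<exists>l. \<forall>i j v. average act act (matrix_unit scV scV i j) v = scV (l i j) v"
proof -
  note V = simple_E_module_E_module[OF simple]
  interpret V: fin_dim_space scV by (rule simple_E_module_fin_dim_space[OF simple])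
  have "\<exists>l. \<forall>v. average act act (matrix_unit scV scV i j) v = scV l v" for i j
    using linear_matrix_unit[OF V.fin_dim_space_axioms V.vector_space_axioms]
    by (intro E_module_hom_scalar[OF k simple V.fin_dim_space_axioms E_module_hom_average[OF V V]])
  then show ?thesis
    by metis
qed

lemma average_matrix_unit_diagonal:
  assumes V: "E_module scE scV act" and "fin_dim_space scV" and i: "i \<in> basis_of scV"
    and l: "average act act (matrix_unit scV scV i i) = scV l"
  shows "l * of_nat (card (basis_of scV)) = of_nat (card (carrier G))"
proof -
  interpret V: fin_dim_space scV by fact
  have "l * of_nat (card (basis_of scV)) = vtrace scV (average act act (matrix_unit scV scV i i))"
    by (simp add: l V.vtrace_scale)
  also have "\<dots> = of_nat (card (carrier G))"
    using linear_matrix_unit[OF V.fin_dim_space_axioms V.vector_space_axioms]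
    by (simp add: vtrace_average[OF V.fin_dim_space_axioms V] V.vtrace_matrix_unit[OF i])
  finally show ?thesis .
qed

end

text \<open>Characteristic 0 is needed to divide by dim V.\<close>

lemma sum_vtrace_mult_vtrace_self:
  fixes scE :: "'k::field_char_0 \<Rightarrow> 'e::ring_1 \<Rightarrow> 'e" and scV :: "'k \<Rightarrow> 'v::ab_group_add \<Rightarrow> 'v"
  assumes "twisted_group_algebra G scE Ecomp b" and k: "alg_closed_field TYPE('k)"
    and simple: "simple_E_module scE scV act"
    and t: "Vector_Spaces.linear scV scV t" and "bij t"
  shows "(\<Sum>w\<in>carrier G. vtrace scV (\<lambda>v. act (b w) (t v))
      * vtrace scV (\<lambda>u. inv_into UNIV t (act (ring_inv (b w)) u))) = of_nat (card (carrier G))"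
proof -
  interpret twisted_group_algebra G scE Ecomp b by fact
  note V = simple_E_module_E_module[OF simple]
  interpret V: fin_dim_space scV by (rule simple_E_module_fin_dim_space[OF simple])
  let ?B = "basis_of scV" and ?n = "of_nat (card (basis_of scV)) :: 'k"
  obtain l where l: "\<And>i j v. average act act (matrix_unit scV scV i j) v = scV (l i j) v"
    using average_matrix_unit_scalar[OF k simple] by blast
  have t_inv: "Vector_Spaces.linear scV scV (inv_into UNIV t)"
    by (rule linear_inv_into[OF t \<open>bij t\<close>])
  have "?n \<noteq> 0"
    using V.card_basis_of_pos simple_E_module_nonzero[OF simple] by auto
  have diagonal: "l i i * ?n = of_nat (card (carrier G))" if "i \<in> ?B" for i
    by (rule average_matrix_unit_diagonal[OF V V.fin_dim_space_axioms that]) (intro ext l)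
  have "(\<Sum>w\<in>carrier G. vtrace scV (\<lambda>v. act (b w) (t v))
      * vtrace scV (\<lambda>u. inv_into UNIV t (act (ring_inv (b w)) u)))
      = (\<Sum>i\<in>?B. \<Sum>j\<in>?B.
          coord scV (inv_into UNIV t (average act act (matrix_unit scV scV i j) (t i))) j)"
    by (rule sum_vtrace_mult_vtrace_eq_average[OF V V V.fin_dim_space_axioms
          V.fin_dim_space_axioms t_inv])
  also have "\<dots> = (\<Sum>i\<in>?B. \<Sum>j\<in>?B. if j = i then l i i else 0)"
    using \<open>bij t\<close>
    by (intro sum.cong refl)
      (auto simp: l linear_map_scale[OF t_inv] bij_is_inj V.coord_scale V.coord_basis)
  also have "\<dots> = (\<Sum>i\<in>?B. l i i)"
    by (simp add: V.finite_Basis)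
  also have "\<dots> = (\<Sum>i\<in>?B. of_nat (card (carrier G)) / ?n)"
    using diagonal \<open>?n \<noteq> 0\<close> by (intro sum.cong refl) (simp add: eq_divide_eq)
  also have "\<dots> = of_nat (card (carrier G))"
    using \<open>?n \<noteq> 0\<close> by simp
  finally show ?thesis .
qed

theorem mainTheorem13:
  fixes G :: "('g, 'm) monoid_scheme"
    and scE :: "'k::field_char_0 \<Rightarrow> 'e::ring_1 \<Rightarrow> 'e"
    and Ecomp :: "'g \<Rightarrow> 'e set"
    and b :: "'g \<Rightarrow> 'e"
    and scV :: "'k \<Rightarrow> 'v::ab_group_add \<Rightarrow> 'v" and act :: "'e \<Rightarrow> 'v \<Rightarrow> 'v" and t :: "'v \<Rightarrow> 'v"
    and scW :: "'k \<Rightarrow> 'w::ab_group_add \<Rightarrow> 'w" and act' :: "'e \<Rightarrow> 'w \<Rightarrow> 'w" and t' :: "'w \<Rightarrow> 'w"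
  assumes k_closed: "alg_closed_field TYPE('k)"
    and grp: "group G" and fin: "finite (carrier G)"
    and alg: "is_algebra scE"
    and dsum: "internal_direct_sum scE (carrier G) Ecomp"
    and dim1: "\<And>w. w \<in> carrier G \<Longrightarrow> vector_space.dim scE (Ecomp w) = 1"
    and mult: "\<And>w y. w \<in> carrier G \<Longrightarrow> y \<in> carrier G \<Longrightarrow>
                 subspace_prod scE (Ecomp w) (Ecomp y) = Ecomp (monoid.mult G w y)"
    and b_in: "\<And>w. w \<in> carrier G \<Longrightarrow> b w \<in> Ecomp w"
    and b_nz: "\<And>w. w \<in> carrier G \<Longrightarrow> b w \<noteq> 0"
    and V_simple: "simple_E_module scE scV act"
    and W_simple: "simple_E_module scE scW act'"
    and t_lin: "Vector_Spaces.linear scV scV t" and t_bij: "bij t"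
    and t'_lin: "Vector_Spaces.linear scW scW t'" and t'_bij: "bij t'"
  shows "(\<not> E_module_iso scV act scW act' \<longrightarrow>
            (1 / of_nat (card (carrier G))) *
              (\<Sum>w\<in>carrier G. vtrace scV (\<lambda>v. act (b w) (t v)) *
                               vtrace scW (\<lambda>u. inv_into UNIV t' (act' (ring_inv (b w)) u))) = 0)
       \<and> (1 / of_nat (card (carrier G))) *
              (\<Sum>w\<in>carrier G. vtrace scV (\<lambda>v. act (b w) (t v)) *
                               vtrace scV (\<lambda>u. inv_into UNIV t (act (ring_inv (b w)) u))) = 1"
proof -
  have twisted: "twisted_group_algebra G scE Ecomp b"
    using grp fin alg dsum dim1 mult b_in b_nz
    by (simp add: twisted_group_algebra_def twisted_group_algebra_axioms_def)
  interpret twisted_group_algebra G scE Ecomp b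
    by (rule twisted)
  have "card (carrier G) \<noteq> 0"
    using finite_carrier one_closed by auto
  with sum_vtrace_mult_vtrace_not_iso[OF V_simple W_simple _
      linear_inv_into[OF t'_lin t'_bij], of t]
    sum_vtrace_mult_vtrace_self[OF twisted k_closed V_simple t_lin t_bij]
  show ?thesis
    by simp
qed

end
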